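(* Let $K$ and $S$ be compact Hausdorff spaces. The following are equivalent: (i) there exists a U-embedding $T\colon C(K)\to C(S)$; (ii) there exists a continuous embedding $h\colon K\to S$ admitting a linear extension operator of norm one, with $h(K)$ a $G_\delta$-subset of $S$.
   Context: $C(K)$, $C(S)$ carry the sup norm. A linear isometry $T\colon X\to Y$ is a U-embedding if every $x^*\in X^*$ has a unique $y^*\in Y^*$ with $T^*(y^* )=x^*$ and $\|y^*\|=\|x^*\|$. For a continuous embedding (homeomorphism onto its image) $h\colon K\to S$, a linear operator $v\colon C(K)\to C(S)$ is a linear extension operator for $h$ if $(vf)(h(k))=f(k)$ for every $f\in C(K)$ and $k\in K$ (equivalently $v^*(\delta_{h(k)})=\delta_k$ for all $k\in K$). *)

theory Defs
  imports "HOL-Analysis.Analysis"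
begin

(* C(K) for compact K is modelled as the type 'k \<Rightarrow>\<^sub>C real (bounded continuous
   functions, sup norm); on a compact space every continuous function is bounded.
   The dual X* is X \<Rightarrow>\<^sub>L real with the operator norm; the adjoint is T*(y) = y o\<^sub>L T. *)

definition U_embedding :: "('x::real_normed_vector \<Rightarrow>\<^sub>L 'y::real_normed_vector) \<Rightarrow> bool" where
  "U_embedding T \<longleftrightarrow>
     (\<forall>x. norm (T x) = norm x) \<and>
     (\<forall>xs :: 'x \<Rightarrow>\<^sub>L real. \<exists>!ys :: 'y \<Rightarrow>\<^sub>L real. ys o\<^sub>L T = xs \<and> norm ys = norm xs)"

definition linear_extension_operator ::
  "('k::topological_space \<Rightarrow> 's::topological_space) \<Rightarrow> (('k \<Rightarrow>\<^sub>C real) \<Rightarrow>\<^sub>L ('s \<Rightarrow>\<^sub>C real)) \<Rightarrow> bool" where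
  "linear_extension_operator h v \<longleftrightarrow> (\<forall>f k. apply_bcontfun (v f) (h k) = apply_bcontfun f k)"

end

(* (ii) implies (i): as h(K) is a closed G_delta set, a series of Urysohn functions gives a
   peak function g : S -> [0,1] with g = 1 exactly on h(K).  Then T f = g * v f is an
   isometric extension operator dominated by g, and composition with h is a norm-one left
   inverse of T, so every functional x on C(K) has the norm-preserving extension x o h^*.
   Any norm-preserving extension y annihilates the functions vanishing on h(K): otherwise,
   truncating such a function to where g <= c < 1 and adding (1 - c) times it to an almost
   norming T f stays in the unit ball, and y would exceed its norm there.

   (i) implies (ii): for an isometry T and a point k, averaging finitely many norm-one
   functions peaking at k and using the finite intersection property gives a point s at
   which T f (s) = u(s) f(k) for all f, where u = T 1 and |u(s)| = 1.  Uniqueness of the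
   norm-preserving extension of the point evaluation at k makes s unique; the resulting map
   h has closed graph, hence is continuous, and is injective.  u * T is a norm-one
   extension operator for h, and uniqueness for the functional u(s) delta_s o T shows that
   h(K) = {s. |u(s)| = 1}, a G_delta set. *)

theory Submission
  imports Defs
begin

section \<open>Compact spaces and bounded continuous functions\<close>

lemma Hausdorff_space_euclidean_t2: "Hausdorff_space (euclidean :: 'a::t2_space topology)"
  using hausdorff by (simp add: Hausdorff_space_def disjnt_def flip: open_openin) blast

lemma apply_Bcontfun_compact:
  fixes f :: "'a::topological_space \<Rightarrow> 'b::metric_space"
  assumes "compact (UNIV :: 'a set)" and "continuous_on UNIV f"
  shows "apply_bcontfun (Bcontfun f) = f"
  using assms by (intro Bcontfun_inverse) (simp add: bcontfun_def compact_imp_bounded compact_continuous_image)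

lemma compact_Urysohn_bcontfun:
  fixes A B :: "'a::t2_space set"
  assumes "compact (UNIV :: 'a set)" and "closed A" and "closed B" and "A \<inter> B = {}"
  obtains \<phi> :: "'a \<Rightarrow>\<^sub>C real"
  where "\<And>x. 0 \<le> \<phi> x \<and> \<phi> x \<le> 1" and "\<And>x. x \<in> A \<Longrightarrow> \<phi> x = 0" and "\<And>x. x \<in> B \<Longrightarrow> \<phi> x = 1"
proof -
  have "compact_space (euclidean :: 'a topology)"
    using assms(1) by (simp add: compact_space_def)
  then have "normal_space (euclidean :: 'a topology)"
    using Hausdorff_space_euclidean_t2 compact_Hausdorff_or_regular_imp_normal_space by blast
  then obtain f where f: "continuous_map euclidean (top_of_set {0..1::real}) f" "f ` A \<subseteq> {0}" "f ` B \<subseteq> {1}"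
    using Urysohn_lemma[of euclidean A B 0 1] assms(2-4) by (auto simp: disjnt_def)
  then have "continuous_on UNIV f" and "\<And>x. f x \<in> {0..1}"
    by (auto simp: continuous_map_in_subtopology)
  moreover from this have "apply_bcontfun (Bcontfun f) = f"
    by (simp add: apply_Bcontfun_compact assms(1))
  ultimately show ?thesis
    using f(2,3) by (intro that[of "Bcontfun f"]) auto
qed

lemma abs_apply_bcontfun_le_norm: "\<bar>apply_bcontfun (f :: 'a::topological_space \<Rightarrow>\<^sub>C real) x\<bar> \<le> norm f"
  using norm_bounded[of f x] by simp

lemma bcontfun_norm_attained:
  fixes f :: "'a::topological_space \<Rightarrow>\<^sub>C real"
  assumes "compact (UNIV :: 'a set)"
  obtains x where "\<bar>f x\<bar> = norm f"
proof -
  obtain x where "\<forall>y. \<bar>f y\<bar> \<le> \<bar>f x\<bar>"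
    using continuous_attains_sup[OF assms, of "\<lambda>y. \<bar>f y\<bar>"] by (auto intro: continuous_intros)
  then have "norm f \<le> \<bar>f x\<bar>"
    by (intro norm_bound) simp
  with abs_apply_bcontfun_le_norm[of f x] have "\<bar>f x\<bar> = norm f"
    by linarith
  then show ?thesis
    by (rule that)
qed

lemma norm_const_bcontfun_one [simp]: "norm (const_bcontfun 1 :: 'a::topological_space \<Rightarrow>\<^sub>C real) = 1"
  using abs_apply_bcontfun_le_norm[of "const_bcontfun 1 :: 'a \<Rightarrow>\<^sub>C real" undefined]
  by (intro antisym norm_bound) simp_all

lemma sum_apply_bcontfun:
  fixes F :: "'i \<Rightarrow> 'a::topological_space \<Rightarrow>\<^sub>C 'b::real_normed_vector"
  shows "apply_bcontfun (\<Sum>i\<in>I. F i) x = (\<Sum>i\<in>I. F i x)"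
  by (induction I rule: infinite_finite_induct) simp_all

lemma continuous_on_apply_bcontfun_compose [continuous_intros]:
  "continuous_on S g \<Longrightarrow> continuous_on S (\<lambda>z. apply_bcontfun f (g z))"
  by (rule continuous_on_compose2[OF continuous_on_apply_bcontfun]) auto

lemma bcontfun_soft_threshold:
  fixes \<phi> :: "'a::topological_space \<Rightarrow>\<^sub>C real"
  assumes "0 \<le> \<eta>"
  obtains \<psi> :: "'a \<Rightarrow>\<^sub>C real"
  where "norm (\<phi> - \<psi>) \<le> \<eta>" and "\<And>x. \<bar>\<psi> x\<bar> \<le> \<bar>\<phi> x\<bar>" and "\<And>x. \<bar>\<phi> x\<bar> < \<eta> \<Longrightarrow> \<psi> x = 0"
proof -
  define t where "t x = \<phi> x - max (- \<eta>) (min \<eta> (\<phi> x))" for x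
  have "t \<in> bcontfun"
  proof (rule bcontfun_normI)
    show "continuous_on UNIV t"
      unfolding t_def by (intro continuous_intros)
    show "norm (t x) \<le> norm \<phi>" for x
      using abs_apply_bcontfun_le_norm[of \<phi> x] assms by (auto simp: t_def)
  qed
  then have t: "apply_bcontfun (Bcontfun t) = t"
    by (rule Bcontfun_inverse)
  show ?thesis
  proof (rule that[of "Bcontfun t"])
    show "norm (\<phi> - Bcontfun t) \<le> \<eta>"
      by (rule norm_bound) (use assms in \<open>auto simp: t t_def\<close>)
  qed (use assms in \<open>auto simp: t t_def\<close>)
qed

lemma continuous_on_if_closed_graph:
  fixes f :: "'a::topological_space \<Rightarrow> 'b::topological_space"
  assumes "compact (UNIV :: 'b set)" and "closed (range (\<lambda>x. (x, f x)))"
  shows "continuous_on UNIV f"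
  unfolding continuous_on_closed_vimage[OF closed_UNIV]
proof (intro allI impI)
  fix B :: "'b set"
  assume "closed B"
  then have "closed (range (\<lambda>x. (x, f x)) \<inter> UNIV \<times> B)"
    using assms(2) by (intro closed_Int closed_Times) simp_all
  moreover have "closed_map euclidean euclidean (fst :: 'a \<times> 'b \<Rightarrow> 'a)"
    using closed_map_fst[of "euclidean :: 'b topology" "euclidean :: 'a topology"] assms(1)
    by (simp add: compact_space_def)
  ultimately have "closed (fst ` (range (\<lambda>x. (x, f x)) \<inter> UNIV \<times> B))"
    by (simp add: closed_map_def)
  moreover have "fst ` (range (\<lambda>x. (x, f x)) \<inter> UNIV \<times> B) = f -` B \<inter> UNIV"
    by (auto intro: rev_image_eqI[of "(x, f x)" for x])
  ultimately show "closed (f -` B \<inter> UNIV)"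
    by simp
qed

lemma gdelta_in_Collect_ge:
  fixes f :: "'a::topological_space \<Rightarrow> real"
  assumes "continuous_on UNIV f"
  shows "gdelta_in euclidean {x. c \<le> f x}"
proof -
  define U where "U n = {x. c - inverse (real (Suc n)) < f x}" for n
  have eq: "{x. c \<le> f x} = \<Inter>(range U)"
  proof (intro set_eqI iffI)
    fix x
    assume "x \<in> {x. c \<le> f x}"
    moreover have "0 < inverse (real (Suc n))" for n
      by simp
    ultimately have "c - inverse (real (Suc n)) < f x" for n
      by (smt (verit) mem_Collect_eq)
    then show "x \<in> \<Inter>(range U)"
      by (simp add: U_def)
  next
    fix x
    assume x: "x \<in> \<Inter>(range U)"
    show "x \<in> {x. c \<le> f x}"
    proof (rule ccontr)
      assume "x \<notin> {x. c \<le> f x}"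
      then obtain n where "inverse (real (Suc n)) < c - f x"
        using reals_Archimedean[of "c - f x"] by auto
      moreover have "x \<in> U n"
        using x by blast
      ultimately show False
        by (simp add: U_def)
    qed
  qed
  have "open (U n)" for n
    unfolding U_def by (rule open_Collect_less[OF continuous_on_const assms])
  then have "gdelta_in euclidean (U n)" for n
    by (simp add: open_imp_gdelta_in)
  then show ?thesis
    unfolding eq by (intro gdelta_in_Inter) auto
qed

lemma compact_continuous_strict_bound:
  fixes g :: "'a::topological_space \<Rightarrow> real"
  assumes "compact C" and "continuous_on C g" and "\<And>x. x \<in> C \<Longrightarrow> g x < b"
  obtains c where "c < b" and "\<And>x. x \<in> C \<Longrightarrow> g x \<le> c"
proof (cases "C = {}")
  case False
  then obtain x0 where "x0 \<in> C" "\<And>x. x \<in> C \<Longrightarrow> g x \<le> g x0"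
    using continuous_attains_sup[OF assms(1) _ assms(2)] by blast
  then show ?thesis
    using that assms(3) by blast
qed (use that[of "b - 1"] in auto)

lemma abs_sum_eq_card_extremal:
  fixes b :: "'i \<Rightarrow> real"
  assumes "finite I" and "\<And>i. i \<in> I \<Longrightarrow> \<bar>b i\<bar> \<le> 1" and "\<bar>sum b I\<bar> = card I"
  shows "(\<forall>i\<in>I. b i = 1) \<or> (\<forall>i\<in>I. b i = -1)"
proof -
  have all_one: "\<forall>i\<in>I. c i = 1" if "\<And>i. i \<in> I \<Longrightarrow> c i \<le> 1" and "sum c I = card I"
    for c :: "'i \<Rightarrow> real"
  proof -
    have "(\<Sum>i\<in>I. 1 - c i) = 0"
      using that(2) by (simp add: sum_subtractf)
    then show ?thesis
      using sum_nonneg_eq_0_iff[OF assms(1), of "\<lambda>i. 1 - c i"] that(1) by auto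
  qed
  show ?thesis
  proof (cases "0 \<le> sum b I")
    case True
    then have "sum b I = card I"
      using assms(3) by simp
    then show ?thesis
      using all_one[of b] assms(2) abs_le_iff by blast
  next
    case False
    then have "(\<Sum>i\<in>I. - b i) = card I"
      using assms(3) by (simp add: sum_negf)
    then show ?thesis
      using all_one[of "\<lambda>i. - b i"] assms(2) abs_le_iff by force
  qed
qed

lemma norm_add_supported_le_one:
  fixes h \<psi> :: "'a::topological_space \<Rightarrow>\<^sub>C real"
  assumes "\<And>s. \<bar>h s\<bar> \<le> g s" and "\<And>s. g s \<le> 1" and "\<And>s. s \<in> C \<Longrightarrow> g s \<le> c" and "c \<le> 1"
    and "\<And>s. s \<notin> C \<Longrightarrow> \<psi> s = 0" and "norm \<psi> \<le> 1"
  shows "norm (h + (1 - c) *\<^sub>R \<psi>) \<le> 1"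
proof (rule norm_bound)
  fix s
  show "norm ((h + (1 - c) *\<^sub>R \<psi>) s) \<le> 1"
  proof (cases "s \<in> C")
    case True
    have "\<bar>(1 - c) * \<psi> s\<bar> \<le> 1 - c"
      using abs_apply_bcontfun_le_norm[of \<psi> s] assms(4,6) by (simp add: abs_mult mult_left_le)
    then show ?thesis
      using assms(1)[of s] assms(3)[OF True] by simp
  next
    case False
    then show ?thesis
      using assms(1,2,5)[of s] by simp
  qed
qed

lemma norm_bump_add_scaled_le:
  fixes p f :: "'a::topological_space \<Rightarrow>\<^sub>C real"
  assumes "\<And>x. 0 \<le> p x \<and> p x \<le> 1" and "\<And>x. x \<notin> U \<Longrightarrow> p x = 0"
    and "\<And>x. x \<in> U \<Longrightarrow> \<bar>f x\<bar> \<le> \<epsilon>" and "0 \<le> t" and "t * norm f \<le> 1" and "0 \<le> \<epsilon>"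
  shows "norm (p + t *\<^sub>R f) \<le> 1 + t * \<epsilon>"
proof (rule norm_bound)
  fix x
  have "\<bar>p x + t * f x\<bar> \<le> \<bar>p x\<bar> + t * \<bar>f x\<bar>"
    using abs_triangle_ineq[of "p x" "t * f x"] assms(4) by (simp add: abs_mult)
  moreover have "\<bar>p x\<bar> + t * \<bar>f x\<bar> \<le> 1 + t * \<epsilon>"
  proof (cases "x \<in> U")
    case True
    then have "t * \<bar>f x\<bar> \<le> t * \<epsilon>"
      using assms(3,4) by (simp add: mult_left_mono)
    then show ?thesis
      using assms(1)[of x] by simp
  next
    case False
    have "t * \<bar>f x\<bar> \<le> t * norm f"
      using assms(4) abs_apply_bcontfun_le_norm[of f x] by (simp add: mult_left_mono)
    moreover have "0 \<le> t * \<epsilon>"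
      using assms(4,6) by simp
    ultimately show ?thesis
      using assms(2)[OF False] assms(5) by simp
  qed
  ultimately show "norm ((p + t *\<^sub>R f) x) \<le> 1 + t * \<epsilon>"
    by simp
qed


section \<open>Operators and norm-preserving extensions\<close>

lemma blinfun_norm_approx:
  fixes x :: "'a::real_normed_vector \<Rightarrow>\<^sub>L real"
  assumes "0 < e"
  shows "\<exists>f. norm f \<le> 1 \<and> norm x - e < x f"
proof (rule ccontr)
  assume "\<not> ?thesis"
  then have below: "x f \<le> norm x - e" if "norm f \<le> 1" for f
    using that by (auto simp: not_less)
  have "norm x \<le> norm x - e"
  proof (rule norm_blinfun_bound)
    show "0 \<le> norm x - e"
      using below[of 0] by simp
    show "norm (x f) \<le> (norm x - e) * norm f" for f
    proof (cases "f = 0")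
      case False
      then have n: "0 < norm f"
        by simp
      have "x (f /\<^sub>R norm f) \<le> norm x - e" and "x (- (f /\<^sub>R norm f)) \<le> norm x - e"
        using n by (intro below; simp)+
      then have "x f / norm f \<le> norm x - e" and "(- x f) / norm f \<le> norm x - e"
        by (simp_all add: blinfun.scaleR_right blinfun.minus_right divide_inverse_commute)
      then show ?thesis
        using pos_divide_le_eq[OF n, of "x f"] pos_divide_le_eq[OF n, of "- x f"]
        by (simp add: abs_le_iff)
    qed simp
  qed
  then show False
    using assms by simp
qed

definition mult_operator :: "('a::topological_space \<Rightarrow>\<^sub>C real) \<Rightarrow> ('a \<Rightarrow>\<^sub>C real) \<Rightarrow>\<^sub>L ('a \<Rightarrow>\<^sub>C real)"
  where "mult_operator g = Blinfun (\<lambda>\<phi> :: 'a \<Rightarrow>\<^sub>C real. Bcontfun (\<lambda>x. g x * \<phi> x))"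

lemma
  fixes g :: "'a::topological_space \<Rightarrow>\<^sub>C real"
  shows mult_operator_apply [simp]: "mult_operator g \<phi> x = g x * \<phi> x"
    and norm_mult_operator_le: "norm (mult_operator g) \<le> norm g"
proof -
  have bound: "\<bar>g x * \<psi> x\<bar> \<le> norm g * norm \<psi>" for \<psi> :: "'a \<Rightarrow>\<^sub>C real" and x
    by (simp add: abs_mult mult_mono abs_apply_bcontfun_le_norm)
  have "(\<lambda>x. g x * \<psi> x) \<in> bcontfun" for \<psi> :: "'a \<Rightarrow>\<^sub>C real"
    using bound by (intro bcontfun_normI continuous_intros) auto
  then have mult: "apply_bcontfun (Bcontfun (\<lambda>x. g x * \<psi> x)) = (\<lambda>x. g x * \<psi> x)"
    for \<psi> :: "'a \<Rightarrow>\<^sub>C real"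
    by (rule Bcontfun_inverse)
  have "bounded_linear (\<lambda>\<psi> :: 'a \<Rightarrow>\<^sub>C real. Bcontfun (\<lambda>x. g x * \<psi> x))"
    by (rule bounded_linear_intro[where K="norm g"];
        intro bcontfun_eqI norm_bound, unfold mult)
      (simp_all add: mult bound distrib_left mult.left_commute mult.commute[of _ "norm g"])
  then have apply_eq: "mult_operator g \<psi> = Bcontfun (\<lambda>x. g x * \<psi> x)" for \<psi> :: "'a \<Rightarrow>\<^sub>C real"
    by (simp add: mult_operator_def bounded_linear_Blinfun_apply)
  then show "mult_operator g \<phi> x = g x * \<phi> x"
    by (simp add: mult)
  show "norm (mult_operator g) \<le> norm g"
    by (intro norm_blinfun_bound norm_bound) (simp_all add: apply_eq mult bound)
qed

definition composition_operator ::
  "('k::topological_space \<Rightarrow> 's::topological_space) \<Rightarrow> ('s \<Rightarrow>\<^sub>C real) \<Rightarrow>\<^sub>L ('k \<Rightarrow>\<^sub>C real)"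
  where "composition_operator h = Blinfun (\<lambda>\<phi> :: 's \<Rightarrow>\<^sub>C real. Bcontfun (\<lambda>k. \<phi> (h k)))"

lemma
  fixes h :: "'k::topological_space \<Rightarrow> 's::topological_space"
  assumes "continuous_on UNIV h"
  shows composition_operator_apply [simp]: "composition_operator h \<phi> k = \<phi> (h k)"
    and norm_composition_operator_le: "norm (composition_operator h) \<le> 1"
proof -
  have "(\<lambda>k. \<psi> (h k)) \<in> bcontfun" for \<psi> :: "'s \<Rightarrow>\<^sub>C real"
    using assms abs_apply_bcontfun_le_norm by (intro bcontfun_normI continuous_intros) auto
  then have comp: "apply_bcontfun (Bcontfun (\<lambda>k. \<psi> (h k))) = (\<lambda>k. \<psi> (h k))"
    for \<psi> :: "'s \<Rightarrow>\<^sub>C real"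
    by (rule Bcontfun_inverse)
  have "bounded_linear (\<lambda>\<psi> :: 's \<Rightarrow>\<^sub>C real. Bcontfun (\<lambda>k. \<psi> (h k)))"
    by (rule bounded_linear_intro[where K=1];
        intro bcontfun_eqI norm_bound, unfold comp) (simp_all add: comp abs_apply_bcontfun_le_norm)
  then have apply_eq: "composition_operator h \<psi> = Bcontfun (\<lambda>k. \<psi> (h k))"
    for \<psi> :: "'s \<Rightarrow>\<^sub>C real"
    by (simp add: composition_operator_def bounded_linear_Blinfun_apply)
  then show "composition_operator h \<phi> k = \<phi> (h k)"
    by (simp add: comp)
  show "norm (composition_operator h) \<le> 1"
    by (intro norm_blinfun_bound norm_bound) (simp_all add: apply_eq comp abs_apply_bcontfun_le_norm)
qed

definition eval_functional :: "'a::topological_space \<Rightarrow> ('a \<Rightarrow>\<^sub>C real) \<Rightarrow>\<^sub>L real"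
  where "eval_functional x = Blinfun (\<lambda>\<phi> :: 'a \<Rightarrow>\<^sub>C real. \<phi> x)"

lemma eval_functional_apply [simp]: "eval_functional x \<phi> = \<phi> x"
proof -
  have "bounded_linear (\<lambda>\<phi> :: 'a \<Rightarrow>\<^sub>C real. \<phi> x)"
    by (rule bounded_linear_intro[where K=1]) (simp_all add: abs_apply_bcontfun_le_norm)
  then show ?thesis
    by (simp add: eval_functional_def bounded_linear_Blinfun_apply)
qed

lemma norm_eval_functional [simp]: "norm (eval_functional x) = 1"
proof (rule antisym)
  show "norm (eval_functional x) \<le> 1"
    by (rule norm_blinfun_bound) (simp_all add: abs_apply_bcontfun_le_norm)
  show "1 \<le> norm (eval_functional x)"
    using norm_blinfun[of "eval_functional x" "const_bcontfun 1"] by simp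
qed

lemma norm_blinfun_le_one_if_isometry:
  assumes "\<And>f. norm (blinfun_apply T f) = norm f"
  shows "norm T \<le> 1"
  by (rule norm_blinfun_bound) (simp_all add: assms)

lemma norm_blinfun_compose_isometry_le:
  assumes "\<And>f. norm (blinfun_apply T f) = norm f"
  shows "norm (y o\<^sub>L T) \<le> norm y"
proof -
  have "norm (y o\<^sub>L T) \<le> norm y * norm T"
    by (rule norm_blinfun_compose)
  also have "\<dots> \<le> norm y * 1"
    by (rule mult_left_mono[OF norm_blinfun_le_one_if_isometry[OF assms] norm_ge_zero])
  finally show ?thesis
    by simp
qed

lemma U_embedding_extension_unique:
  fixes T :: "'x::real_normed_vector \<Rightarrow>\<^sub>L 'y::real_normed_vector" and y1 y2 :: "'y \<Rightarrow>\<^sub>L real"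
  assumes "U_embedding T" and "y1 o\<^sub>L T = y2 o\<^sub>L T"
    and "norm y1 \<le> norm (y1 o\<^sub>L T)" and "norm y2 \<le> norm (y2 o\<^sub>L T)"
  shows "y1 = y2"
proof -
  note iso = conjunct1[OF assms(1)[unfolded U_embedding_def], rule_format]
  note unique = conjunct2[OF assms(1)[unfolded U_embedding_def], rule_format, of "y1 o\<^sub>L T"]
  have "y1 o\<^sub>L T = y1 o\<^sub>L T \<and> norm y1 = norm (y1 o\<^sub>L T)"
    using assms(3) norm_blinfun_compose_isometry_le[OF iso, of y1] by simp
  then have "(THE y. y o\<^sub>L T = y1 o\<^sub>L T \<and> norm y = norm (y1 o\<^sub>L T)) = y1"
    by (rule the1_equality[OF unique])
  moreover have "y2 o\<^sub>L T = y1 o\<^sub>L T \<and> norm y2 = norm (y1 o\<^sub>L T)"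
    using assms(2,4) norm_blinfun_compose_isometry_le[OF iso, of y2] by simp
  then have "(THE y. y o\<^sub>L T = y1 o\<^sub>L T \<and> norm y = norm (y1 o\<^sub>L T)) = y2"
    by (rule the1_equality[OF unique])
  ultimately show ?thesis
    by simp
qed


section \<open>From an extension operator to a U-embedding\<close>

lemma bcontfun_peak_of_sequence:
  fixes F :: "nat \<Rightarrow> 'a::topological_space \<Rightarrow>\<^sub>C real"
  assumes F01: "\<And>n x. 0 \<le> F n x \<and> F n x \<le> 1"
  obtains g :: "'a \<Rightarrow>\<^sub>C real"
  where "\<And>x. 0 \<le> g x \<and> g x \<le> 1" and "\<And>x. g x = 1 \<longleftrightarrow> (\<forall>n. F n x = 1)"
proof -
  define defect where "defect x n = (1/2) ^ Suc n * (1 - F n x)" for x n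
  have defect_bounds: "0 \<le> defect x n \<and> defect x n \<le> (1/2) ^ Suc n" for x n
    using F01[of n x] by (simp add: defect_def mult_left_le)
  have summable_half: "summable (\<lambda>n. (1/2 :: real) ^ Suc n)"
    using power_half_series by (rule sums_summable)
  have summable_defect: "summable (defect x)" for x
    using defect_bounds by (intro summable_comparison_test'[OF summable_half]) auto
  have defect_sum: "0 \<le> suminf (defect x) \<and> suminf (defect x) \<le> 1" for x
    using suminf_nonneg[OF summable_defect] suminf_le[OF _ summable_defect summable_half]
      defect_bounds power_half_series
    by (simp add: sums_iff)
  have "uniform_limit UNIV (\<lambda>n x. \<Sum>i<n. defect x i) (\<lambda>x. suminf (defect x)) sequentially"
    using defect_bounds by (intro Weierstrass_m_test[OF _ summable_half]) auto
  moreover have "continuous_on UNIV (\<lambda>x. \<Sum>i<n. defect x i)" for n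
    unfolding defect_def by (intro continuous_intros)
  ultimately have "continuous_on UNIV (\<lambda>x. 1 - suminf (defect x))"
    by (intro continuous_intros uniform_limit_theorem[of _ "\<lambda>n x. \<Sum>i<n. defect x i"]) auto
  then have "(\<lambda>x. 1 - suminf (defect x)) \<in> bcontfun"
    using defect_sum by (intro bcontfun_normI[where b = 1]) auto
  then have g: "apply_bcontfun (Bcontfun (\<lambda>x. 1 - suminf (defect x))) = (\<lambda>x. 1 - suminf (defect x))"
    by (rule Bcontfun_inverse)
  show ?thesis
  proof (rule that[of "Bcontfun (\<lambda>x. 1 - suminf (defect x))"], unfold g)
    show "0 \<le> 1 - suminf (defect x) \<and> 1 - suminf (defect x) \<le> 1" for x
      using defect_sum[of x] by simp
    show "1 - suminf (defect x) = 1 \<longleftrightarrow> (\<forall>n. F n x = 1)" for x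
      using suminf_eq_zero_iff[OF summable_defect] defect_bounds by (simp add: defect_def)
  qed
qed

lemma peak_function_of_closed_gdelta:
  fixes A :: "'s::t2_space set"
  assumes cS: "compact (UNIV :: 's set)" and "closed A" and "gdelta_in euclidean A"
  obtains g :: "'s \<Rightarrow>\<^sub>C real"
  where "\<And>s. 0 \<le> g s \<and> g s \<le> 1" and "\<And>s. s \<in> A \<Longrightarrow> g s = 1" and "\<And>s. s \<notin> A \<Longrightarrow> g s < 1"
proof -
  from assms(3) obtain U
    where U: "(\<forall>n. openin euclidean (U n)) \<and> (\<forall>n. U (Suc n) \<subseteq> U n) \<and> \<Inter>(range U) = A"
    unfolding gdelta_in_descending ..
  then have U_open: "open (U n)" and A_eq: "\<Inter>(range U) = A" for n
    by simp_all
  have "\<forall>n. \<exists>\<phi> :: 's \<Rightarrow>\<^sub>C real.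
    (\<forall>x. 0 \<le> \<phi> x \<and> \<phi> x \<le> 1) \<and> (\<forall>x. x \<notin> U n \<longrightarrow> \<phi> x = 0) \<and> (\<forall>x\<in>A. \<phi> x = 1)"
  proof
    fix n
    have "closed (- U n)" and "- U n \<inter> A = {}"
      using U_open[of n] A_eq by auto
    then obtain \<phi> :: "'s \<Rightarrow>\<^sub>C real" where
      "\<And>x. 0 \<le> \<phi> x \<and> \<phi> x \<le> 1" "\<And>x. x \<in> - U n \<Longrightarrow> \<phi> x = 0" "\<And>x. x \<in> A \<Longrightarrow> \<phi> x = 1"
      using compact_Urysohn_bcontfun[OF cS _ \<open>closed A\<close>, of "- U n"] by blast
    then show "\<exists>\<phi> :: 's \<Rightarrow>\<^sub>C real.
      (\<forall>x. 0 \<le> \<phi> x \<and> \<phi> x \<le> 1) \<and> (\<forall>x. x \<notin> U n \<longrightarrow> \<phi> x = 0) \<and> (\<forall>x\<in>A. \<phi> x = 1)"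
      by (intro exI[of _ \<phi>]) simp
  qed
  then obtain F :: "nat \<Rightarrow> 's \<Rightarrow>\<^sub>C real" where F: "\<forall>n.
    (\<forall>x. 0 \<le> F n x \<and> F n x \<le> 1) \<and> (\<forall>x. x \<notin> U n \<longrightarrow> F n x = 0) \<and> (\<forall>x\<in>A. F n x = 1)"
    by (rule choice[THEN exE])
  then obtain g :: "'s \<Rightarrow>\<^sub>C real"
    where g01: "\<And>s. 0 \<le> g s \<and> g s \<le> 1" and g1: "\<And>s. g s = 1 \<longleftrightarrow> (\<forall>n. F n s = 1)"
    using bcontfun_peak_of_sequence[of F] by blast
  show ?thesis
  proof (rule that[OF g01])
    show "g s = 1" if "s \<in> A" for s
      using that F g1 by simp
    show "g s < 1" if "s \<notin> A" for s
    proof -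
      obtain n where "s \<notin> U n"
        using \<open>s \<notin> A\<close> A_eq by auto
      then have "g s \<noteq> 1"
        using F g1 by force
      then show ?thesis
        using g01[of s] by simp
    qed
  qed
qed

lemma bcontfun_approx_supported_below_one:
  fixes \<phi> g :: "'s::topological_space \<Rightarrow>\<^sub>C real"
  assumes cS: "compact (UNIV :: 's set)" and g_lt: "\<And>s. s \<notin> A \<Longrightarrow> g s < 1"
    and vanish: "\<And>s. s \<in> A \<Longrightarrow> \<phi> s = 0" and "0 < \<eta>"
  obtains \<psi> :: "'s \<Rightarrow>\<^sub>C real" and c
  where "norm (\<phi> - \<psi>) \<le> \<eta>" and "norm \<psi> \<le> norm \<phi>" and "\<And>s. c < g s \<Longrightarrow> \<psi> s = 0"
    and "c < 1"
proof -
  have "0 \<le> \<eta>"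
    using \<open>0 < \<eta>\<close> by simp
  then obtain \<psi> :: "'s \<Rightarrow>\<^sub>C real" where \<psi>: "norm (\<phi> - \<psi>) \<le> \<eta>" "\<And>x. \<bar>\<psi> x\<bar> \<le> \<bar>\<phi> x\<bar>"
    "\<And>x. \<bar>\<phi> x\<bar> < \<eta> \<Longrightarrow> \<psi> x = 0"
    using bcontfun_soft_threshold by blast
  define C where "C = {s. \<eta> \<le> \<bar>\<phi> s\<bar>}"
  have "closed C"
    unfolding C_def by (intro closed_Collect_le continuous_intros)
  then have "compact C"
    using compact_Int_closed[OF cS] by simp
  moreover have "g s < 1" if "s \<in> C" for s
  proof (rule g_lt)
    show "s \<notin> A"
      using that vanish \<open>0 < \<eta>\<close> by (auto simp: C_def)
  qed
  ultimately obtain c where c: "c < 1" "\<And>s. s \<in> C \<Longrightarrow> g s \<le> c"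
    using compact_continuous_strict_bound[of C g 1] by blast
  show ?thesis
  proof (rule that[OF \<psi>(1) _ _ c(1)])
    show "norm \<psi> \<le> norm \<phi>"
    proof (rule norm_bound)
      show "norm (\<psi> x) \<le> norm \<phi>" for x
        using \<psi>(2)[of x] abs_apply_bcontfun_le_norm[of \<phi> x] by simp
    qed
    show "\<psi> s = 0" if "c < g s" for s
      using that c(2)[of s] \<psi>(3)[of s] by (force simp: C_def)
  qed
qed

lemma norm_preserving_extension_nonpos:
  fixes T :: "'x::real_normed_vector \<Rightarrow>\<^sub>L ('s::topological_space \<Rightarrow>\<^sub>C real)"
    and y :: "('s \<Rightarrow>\<^sub>C real) \<Rightarrow>\<^sub>L real" and g \<phi> :: "'s \<Rightarrow>\<^sub>C real"
  assumes cS: "compact (UNIV :: 's set)"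
    and dominated: "\<And>f s. \<bar>T f s\<bar> \<le> g s * norm f"
    and g01: "\<And>s. 0 \<le> g s \<and> g s \<le> 1" and g_lt: "\<And>s. s \<notin> A \<Longrightarrow> g s < 1"
    and norm_y: "norm (y o\<^sub>L T) = norm y"
    and vanish: "\<And>s. s \<in> A \<Longrightarrow> \<phi> s = 0" and norm_\<phi>: "norm \<phi> \<le> 1"
  shows "y \<phi> \<le> 0"
proof (rule ccontr)
  assume "\<not> y \<phi> \<le> 0"
  then have y\<phi>: "0 < y \<phi>"
    by simp
  define N where "N = norm y"
  have "y \<phi> \<le> N"
    using norm_blinfun[of y \<phi>] norm_\<phi> by (simp add: N_def) (smt (verit) mult_left_le norm_ge_zero)
  then have N: "0 < N"
    using y\<phi> by simp
  define \<eta> where "\<eta> = y \<phi> / (2 * N)"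
  have \<eta>: "0 < \<eta>"
    using y\<phi> N by (simp add: \<eta>_def)
  then obtain \<psi> :: "'s \<Rightarrow>\<^sub>C real" and c
    where \<psi>: "norm (\<phi> - \<psi>) \<le> \<eta>" "norm \<psi> \<le> norm \<phi>" "\<And>s. c < g s \<Longrightarrow> \<psi> s = 0"
      and c: "c < 1"
    using bcontfun_approx_supported_below_one[OF cS g_lt vanish] by blast
  have "y \<phi> - y \<psi> \<le> N * \<eta>"
    using norm_blinfun[of y "\<phi> - \<psi>"] \<psi>(1) N
    by (simp add: N_def blinfun.diff_right) (smt (verit) mult_left_mono norm_ge_zero)
  then have y\<psi>: "y \<phi> / 2 \<le> y \<psi>"
    using N by (simp add: \<eta>_def)
  define \<epsilon> where "\<epsilon> = (1 - c) * y \<phi> / 2"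
  have "0 < \<epsilon>"
    using c(1) y\<phi> by (simp add: \<epsilon>_def)
  then obtain f where f: "norm f \<le> 1" "norm (y o\<^sub>L T) - \<epsilon> < (y o\<^sub>L T) f"
    using blinfun_norm_approx by blast
  have "\<bar>T f s\<bar> \<le> g s" for s
    using dominated[of f s] f(1) g01[of s] by (smt (verit) mult_left_le)
  moreover have "norm \<psi> \<le> 1"
    using \<psi>(2) norm_\<phi> by simp
  ultimately have "norm (T f + (1 - c) *\<^sub>R \<psi>) \<le> 1"
    using g01 c \<psi>(3) by (intro norm_add_supported_le_one[where g = g and C = "{s. g s \<le> c}"]) auto
  then have "y (T f + (1 - c) *\<^sub>R \<psi>) \<le> N"
    using norm_blinfun[of y "T f + (1 - c) *\<^sub>R \<psi>"] N
    by (simp add: N_def) (smt (verit) mult_left_le norm_ge_zero)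
  moreover have "y (T f + (1 - c) *\<^sub>R \<psi>) = (y o\<^sub>L T) f + (1 - c) * y \<psi>"
    by (simp add: blinfun.add_right blinfun.scaleR_right)
  moreover have "(1 - c) * (y \<phi> / 2) \<le> (1 - c) * y \<psi>"
    using y\<psi> c(1) by (simp add: mult_left_mono)
  ultimately show False
    using f(2) norm_y by (simp add: N_def \<epsilon>_def)
qed

lemma norm_preserving_extension_annihilates:
  fixes T :: "'x::real_normed_vector \<Rightarrow>\<^sub>L ('s::topological_space \<Rightarrow>\<^sub>C real)"
    and y :: "('s \<Rightarrow>\<^sub>C real) \<Rightarrow>\<^sub>L real" and g \<phi> :: "'s \<Rightarrow>\<^sub>C real"
  assumes "compact (UNIV :: 's set)"
    and "\<And>f s. \<bar>T f s\<bar> \<le> g s * norm f"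
    and "\<And>s. 0 \<le> g s \<and> g s \<le> 1" and "\<And>s. s \<notin> A \<Longrightarrow> g s < 1"
    and "norm (y o\<^sub>L T) = norm y"
    and vanish: "\<And>s. s \<in> A \<Longrightarrow> \<phi> s = 0"
  shows "y \<phi> = 0"
proof -
  define \<phi>' where "\<phi>' = (1 / (norm \<phi> + 1)) *\<^sub>R \<phi>"
  have pos: "0 < norm \<phi> + 1"
    by (simp add: add_nonneg_pos)
  then have "norm \<phi>' \<le> 1" and "norm (- \<phi>') \<le> 1"
    by (simp_all add: \<phi>'_def divide_le_eq)
  moreover have "\<phi>' s = 0" and "(- \<phi>') s = 0" if "s \<in> A" for s
    using vanish[OF that] by (simp_all add: \<phi>'_def)
  ultimately have "y \<phi>' \<le> 0" and "y (- \<phi>') \<le> 0"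
    using norm_preserving_extension_nonpos[OF assms(1-5)] by blast+
  then have "y \<phi>' = 0"
    by (simp add: blinfun.minus_right)
  then show ?thesis
    using pos by (simp add: \<phi>'_def blinfun.scaleR_right)
qed

lemma dominated_extension_isometric:
  fixes T :: "('k::topological_space \<Rightarrow>\<^sub>C real) \<Rightarrow>\<^sub>L ('s::topological_space \<Rightarrow>\<^sub>C real)"
    and h :: "'k \<Rightarrow> 's" and g :: "'s \<Rightarrow>\<^sub>C real"
  assumes extends: "\<And>f k. T f (h k) = f k"
    and dominated: "\<And>f s. \<bar>T f s\<bar> \<le> g s * norm f"
    and g01: "\<And>s. 0 \<le> g s \<and> g s \<le> 1"
  shows "norm (T f) = norm f"
proof (rule antisym)
  show "norm (T f) \<le> norm f"
  proof (rule norm_bound)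
    fix s
    have "g s * norm f \<le> norm f"
      using g01[of s] by (simp add: mult_left_le_one_le)
    then show "norm (T f s) \<le> norm f"
      using dominated[of f s] by simp
  qed
  show "norm f \<le> norm (T f)"
  proof (rule norm_bound)
    fix k
    show "norm (f k) \<le> norm (T f)"
      using abs_apply_bcontfun_le_norm[of "T f" "h k"] by (simp add: extends)
  qed
qed

lemma U_embedding_if_dominated_extension:
  fixes T :: "('k::topological_space \<Rightarrow>\<^sub>C real) \<Rightarrow>\<^sub>L ('s::topological_space \<Rightarrow>\<^sub>C real)"
    and h :: "'k \<Rightarrow> 's" and g :: "'s \<Rightarrow>\<^sub>C real"
  assumes cS: "compact (UNIV :: 's set)" and hc: "continuous_on UNIV h"
    and extends: "\<And>f k. T f (h k) = f k"
    and dominated: "\<And>f s. \<bar>T f s\<bar> \<le> g s * norm f"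
    and g01: "\<And>s. 0 \<le> g s \<and> g s \<le> 1" and g_lt: "\<And>s. s \<notin> range h \<Longrightarrow> g s < 1"
  shows "U_embedding T"
proof -
  have iso: "norm (T f) = norm f" for f
    using extends dominated g01 by (rule dominated_extension_isometric)
  have left_inverse: "composition_operator h (T f) = f" for f
    by (rule bcontfun_eqI) (simp add: hc extends)
  have "\<exists>!y. y o\<^sub>L T = x \<and> norm y = norm x" for x :: "('k \<Rightarrow>\<^sub>C real) \<Rightarrow>\<^sub>L real"
  proof (rule ex1I)
    let ?z = "x o\<^sub>L composition_operator h"
    have zT: "?z o\<^sub>L T = x"
      by (rule blinfun_eqI) (simp add: left_inverse)
    have "norm ?z \<le> norm x * norm (composition_operator h)"
      by (rule norm_blinfun_compose)
    also have "\<dots> \<le> norm x"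
      using norm_composition_operator_le[OF hc] by (simp add: mult_left_le)
    finally have "norm ?z \<le> norm x" .
    moreover have "norm x \<le> norm ?z"
      using norm_blinfun_compose_isometry_le[OF iso, of ?z] by (simp add: zT)
    ultimately show "?z o\<^sub>L T = x \<and> norm ?z = norm x"
      using zT by simp
    fix y
    assume y: "y o\<^sub>L T = x \<and> norm y = norm x"
    then have yT: "y (T f) = x f" for f
      using blinfun_apply_blinfun_compose[of y T f] by simp
    show "y = ?z"
    proof (rule blinfun_eqI)
      fix \<phi>
      have "y (\<phi> - T (composition_operator h \<phi>)) = 0"
      proof (rule norm_preserving_extension_annihilates[OF cS dominated g01 g_lt])
        show "norm (y o\<^sub>L T) = norm y"
          using y by simp
        show "(\<phi> - T (composition_operator h \<phi>)) s = 0" if "s \<in> range h" for s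
          using that by (auto simp: hc extends)
      qed
      then show "y \<phi> = ?z \<phi>"
        by (simp add: blinfun.diff_right yT)
    qed
  qed
  then show ?thesis
    by (simp add: U_embedding_def iso)
qed

lemma U_embedding_if_extension_operator:
  fixes h :: "'k::topological_space \<Rightarrow> 's::t2_space" and v :: "('k \<Rightarrow>\<^sub>C real) \<Rightarrow>\<^sub>L ('s \<Rightarrow>\<^sub>C real)"
  assumes cK: "compact (UNIV :: 'k set)" and cS: "compact (UNIV :: 's set)"
    and emb: "embedding_map euclidean euclidean h"
    and extends: "linear_extension_operator h v" and norm_v: "norm v = 1"
    and gdelta: "gdelta_in euclidean (range h)"
  shows "\<exists>T :: ('k \<Rightarrow>\<^sub>C real) \<Rightarrow>\<^sub>L ('s \<Rightarrow>\<^sub>C real). U_embedding T"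
proof -
  have "continuous_map euclidean euclidean h"
    using homeomorphic_imp_continuous_map[OF emb[unfolded embedding_map_def]]
    by (simp add: continuous_map_in_subtopology)
  then have hc: "continuous_on UNIV h"
    by simp
  have "closed (range h)"
    using compact_continuous_image[OF hc cK] by (rule compact_imp_closed)
  then obtain g :: "'s \<Rightarrow>\<^sub>C real"
    where g01: "\<And>s. 0 \<le> g s \<and> g s \<le> 1" and g1: "\<And>s. s \<in> range h \<Longrightarrow> g s = 1"
      and g_lt: "\<And>s. s \<notin> range h \<Longrightarrow> g s < 1"
    using peak_function_of_closed_gdelta[OF cS _ gdelta] by blast
  have "U_embedding (mult_operator g o\<^sub>L v)"
  proof (rule U_embedding_if_dominated_extension[OF cS hc _ _ g01 g_lt])
    show "(mult_operator g o\<^sub>L v) f (h k) = f k" for f k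
      using extends g1 by (simp add: linear_extension_operator_def)
    show "\<bar>(mult_operator g o\<^sub>L v) f s\<bar> \<le> g s * norm f" for f s
    proof -
      have "\<bar>v f s\<bar> \<le> norm f"
        using abs_apply_bcontfun_le_norm[of "v f" s] norm_blinfun[of v f] norm_v by simp
      then show ?thesis
        using g01[of s] by (simp add: abs_mult mult_left_mono)
    qed
  qed
  then show ?thesis
    by blast
qed


section \<open>From a U-embedding to an extension operator\<close>

definition weighted_eval_at ::
  "(('k::topological_space \<Rightarrow>\<^sub>C real) \<Rightarrow>\<^sub>L ('s::topological_space \<Rightarrow>\<^sub>C real)) \<Rightarrow> 's \<Rightarrow> 'k \<Rightarrow> bool"
  where "weighted_eval_at T s k \<longleftrightarrow>
    \<bar>T (const_bcontfun 1) s\<bar> = 1 \<and> (\<forall>f. T f s = T (const_bcontfun 1) s * f k)"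

lemma
  fixes T :: "('k::topological_space \<Rightarrow>\<^sub>C real) \<Rightarrow>\<^sub>L ('s::topological_space \<Rightarrow>\<^sub>C real)"
  assumes "weighted_eval_at T s k"
  shows weighted_eval_at_weight: "T (const_bcontfun 1) s = 1 \<or> T (const_bcontfun 1) s = -1"
    and weighted_eval_at_apply: "T f s = T (const_bcontfun 1) s * f k"
proof -
  have "\<bar>T (const_bcontfun 1) s\<bar> = 1"
    using assms unfolding weighted_eval_at_def by blast
  then show "T (const_bcontfun 1) s = 1 \<or> T (const_bcontfun 1) s = -1"
    by (auto simp: abs_if split: if_splits)
  show "T f s = T (const_bcontfun 1) s * f k"
    using assms unfolding weighted_eval_at_def by blast
qed

lemma isometry_finite_common_peak:
  fixes T :: "('k::topological_space \<Rightarrow>\<^sub>C real) \<Rightarrow>\<^sub>L ('s::topological_space \<Rightarrow>\<^sub>C real)"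
  assumes cS: "compact (UNIV :: 's set)" and iso: "\<And>f. norm (T f) = norm f"
    and Q: "finite Q" "Q \<noteq> {}" "Q \<subseteq> {p. apply_bcontfun p k = 1 \<and> norm p \<le> 1}"
  shows "\<exists>s. (\<forall>p\<in>Q. apply_bcontfun (T p) s = 1) \<or> (\<forall>p\<in>Q. apply_bcontfun (T p) s = -1)"
proof -
  have card: "0 < card Q"
    using Q(1,2) by (simp add: card_gt_0_iff)
  define q where "q = (1 / card Q) *\<^sub>R (\<Sum>p\<in>Q. p)"
  have p_le: "\<bar>p x\<bar> \<le> 1" if "p \<in> Q" for p :: "'k \<Rightarrow>\<^sub>C real" and x
    using that Q(3) abs_apply_bcontfun_le_norm[of p x] by auto
  have "(\<Sum>p\<in>Q. apply_bcontfun p k) = (\<Sum>p\<in>Q. 1)"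
    using Q(3) by (intro sum.cong) auto
  then have "q k = 1"
    using card by (simp add: q_def sum_apply_bcontfun)
  moreover have "norm q \<le> 1"
  proof (rule norm_bound)
    fix x
    have "\<bar>\<Sum>p\<in>Q. apply_bcontfun p x\<bar> \<le> (\<Sum>p\<in>Q. 1)"
      by (intro order_trans[OF sum_abs sum_mono] p_le)
    then show "norm (q x) \<le> 1"
      using card by (simp add: q_def sum_apply_bcontfun abs_mult)
  qed
  ultimately have "norm (T q) = 1"
    using abs_apply_bcontfun_le_norm[of q k] iso[of q] by simp
  moreover obtain s where "\<bar>T q s\<bar> = norm (T q)"
    by (rule bcontfun_norm_attained[OF cS])
  ultimately have "\<bar>T q s\<bar> = 1"
    by simp
  moreover have "T q s = (\<Sum>p\<in>Q. apply_bcontfun (T p) s) / card Q"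
    by (simp add: q_def blinfun.scaleR_right blinfun.sum_right sum_apply_bcontfun)
  ultimately have "\<bar>\<Sum>p\<in>Q. apply_bcontfun (T p) s\<bar> = card Q"
    using card by (simp add: abs_divide divide_eq_1_iff)
  moreover have "\<bar>T p s\<bar> \<le> 1" if "p \<in> Q" for p :: "'k \<Rightarrow>\<^sub>C real"
    using that Q(3) abs_apply_bcontfun_le_norm[of "T p" s] iso[of p] by auto
  ultimately show ?thesis
    by (intro exI[of _ s] abs_sum_eq_card_extremal[OF Q(1)])
qed

lemma isometry_common_peak_point:
  fixes T :: "('k::topological_space \<Rightarrow>\<^sub>C real) \<Rightarrow>\<^sub>L ('s::topological_space \<Rightarrow>\<^sub>C real)"
  assumes cS: "compact (UNIV :: 's set)" and iso: "\<And>f. norm (T f) = norm f"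
  shows "\<exists>s. \<bar>T (const_bcontfun 1) s\<bar> = 1 \<and>
    (\<forall>p. apply_bcontfun p k = 1 \<and> norm p \<le> 1 \<longrightarrow> T p s = T (const_bcontfun 1) s)"
proof -
  define P :: "('k \<Rightarrow>\<^sub>C real) set" where "P = {p. apply_bcontfun p k = 1 \<and> norm p \<le> 1}"
  define peak where "peak p = {s. \<bar>T (const_bcontfun 1) s\<bar> = 1 \<and> T p s = T (const_bcontfun 1) s}"
    for p
  have "UNIV \<inter> (\<Inter>p\<in>P. peak p) \<noteq> {}"
  proof (rule compact_imp_fip_image[OF cS])
    show "closed (peak p)" for p :: "'k \<Rightarrow>\<^sub>C real"
      unfolding peak_def by (intro closed_Collect_conj closed_Collect_eq continuous_intros)
    fix Q
    assume "finite Q" and "Q \<subseteq> P"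
    then have "finite (insert (const_bcontfun 1) Q)"
      and "insert (const_bcontfun 1) Q \<subseteq> {p. apply_bcontfun p k = 1 \<and> norm p \<le> 1}"
      by (auto simp: P_def)
    from isometry_finite_common_peak[OF cS iso this(1) insert_not_empty this(2)]
    obtain s where "(\<forall>p\<in>insert (const_bcontfun 1) Q. apply_bcontfun (T p) s = 1)
        \<or> (\<forall>p\<in>insert (const_bcontfun 1) Q. apply_bcontfun (T p) s = -1)" ..
    then have "s \<in> UNIV \<inter> (\<Inter>p\<in>Q. peak p)"
      by (auto simp: peak_def)
    then show "UNIV \<inter> (\<Inter>p\<in>Q. peak p) \<noteq> {}"
      by auto
  qed
  then obtain s where "s \<in> (\<Inter>p\<in>P. peak p)"
    by auto
  then have s: "s \<in> peak p" if "p \<in> P" for p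
    using that by simp
  show ?thesis
  proof (intro exI[of _ s] conjI allI impI)
    show "\<bar>T (const_bcontfun 1) s\<bar> = 1"
      using s[of "const_bcontfun 1"] by (simp add: P_def peak_def)
    fix p :: "'k \<Rightarrow>\<^sub>C real"
    assume "p k = 1 \<and> norm p \<le> 1"
    then show "T p s = T (const_bcontfun 1) s"
      using s[of p] by (simp add: P_def peak_def)
  qed
qed

lemma isometry_common_peak_point_nonpos:
  fixes T :: "('k::t2_space \<Rightarrow>\<^sub>C real) \<Rightarrow>\<^sub>L ('s::topological_space \<Rightarrow>\<^sub>C real)"
    and f :: "'k \<Rightarrow>\<^sub>C real"
  assumes cK: "compact (UNIV :: 'k set)" and iso: "\<And>f. norm (T f) = norm f"
    and unimodular: "\<bar>T (const_bcontfun 1) s\<bar> = 1"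
    and peak: "\<And>p. apply_bcontfun p k = 1 \<Longrightarrow> norm p \<le> 1 \<Longrightarrow> T p s = T (const_bcontfun 1) s"
    and fk: "f k = 0"
  shows "T (const_bcontfun 1) s * T f s \<le> 0"
proof (rule ccontr)
  define u where "u = T (const_bcontfun 1) s"
  have u: "u = 1 \<or> u = -1"
    using unimodular by (auto simp: u_def abs_if split: if_splits)
  define a where "a = u * T f s"
  assume "\<not> T (const_bcontfun 1) s * T f s \<le> 0"
  then have a: "0 < a"
    by (simp add: a_def u_def)
  define U where "U = {x. \<bar>f x\<bar> < a / 2}"
  have "closed (- U)"
    unfolding U_def by (intro closed_Compl open_Collect_less continuous_intros)
  moreover have "- U \<inter> {k} = {}"
    using fk a by (simp add: U_def)
  ultimately obtain p :: "'k \<Rightarrow>\<^sub>C real"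
    where p01: "\<And>x. 0 \<le> p x \<and> p x \<le> 1" and p0: "\<And>x. x \<in> - U \<Longrightarrow> p x = 0"
      and p1: "\<And>x. x \<in> {k} \<Longrightarrow> p x = 1"
    using compact_Urysohn_bcontfun[OF cK _ closed_singleton] by blast
  have "norm p \<le> 1"
    by (rule norm_bound) (use p01 in simp)
  then have Tp: "T p s = u"
    using peak[of p] p1 by (simp add: u_def)
  \<comment> \<open>Adding \<open>t f\<close>, which is small where the bump \<open>p\<close> lives, raises \<open>u T (\<cdot>) s\<close> by \<open>t a\<close> but the norm only by \<open>t a / 2\<close>.\<close>
  define t where "t = 1 / (norm f + 1)"
  have t: "0 < t" "t * norm f \<le> 1"
    by (simp_all add: t_def add_nonneg_pos divide_le_eq)
  have "norm (p + t *\<^sub>R f) \<le> 1 + t * (a / 2)"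
    using p01 p0 t a by (intro norm_bump_add_scaled_le[where U = U]) (auto simp: U_def)
  moreover have "u * T (p + t *\<^sub>R f) s = 1 + t * a"
    using u by (auto simp: blinfun.add_right blinfun.scaleR_right Tp a_def algebra_simps)
  moreover have "\<bar>u * T (p + t *\<^sub>R f) s\<bar> \<le> norm (p + t *\<^sub>R f)"
    using abs_apply_bcontfun_le_norm[of "T (p + t *\<^sub>R f)" s] iso[of "p + t *\<^sub>R f"] u by auto
  moreover have "0 < t * a"
    using t a by simp
  ultimately show False
    by simp
qed

lemma weighted_eval_at_common_peak_point:
  fixes T :: "('k::t2_space \<Rightarrow>\<^sub>C real) \<Rightarrow>\<^sub>L ('s::topological_space \<Rightarrow>\<^sub>C real)"
  assumes cK: "compact (UNIV :: 'k set)" and iso: "\<And>f. norm (T f) = norm f"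
    and unimodular: "\<bar>T (const_bcontfun 1) s\<bar> = 1"
    and peak: "\<And>p. apply_bcontfun p k = 1 \<Longrightarrow> norm p \<le> 1 \<Longrightarrow> T p s = T (const_bcontfun 1) s"
  shows "weighted_eval_at T s k"
proof -
  define u where "u = T (const_bcontfun 1) s"
  have u: "u = 1 \<or> u = -1"
    using unimodular by (auto simp: u_def abs_if split: if_splits)
  have nonpos: "u * T f s \<le> 0" if "f k = 0" for f :: "'k \<Rightarrow>\<^sub>C real"
    unfolding u_def by (intro isometry_common_peak_point_nonpos[OF cK iso unimodular _ that] peak)
  have "T f s = u * f k" for f :: "'k \<Rightarrow>\<^sub>C real"
  proof -
    have vanish: "u * T g s = 0" if "g k = 0" for g :: "'k \<Rightarrow>\<^sub>C real"
      using nonpos[OF that] nonpos[of "- g"] that by (simp add: blinfun.minus_right)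
    have "u * T f s = u * (u * f k)"
      using vanish[of "f - f k *\<^sub>R const_bcontfun 1"]
      by (simp add: blinfun.diff_right blinfun.scaleR_right u_def algebra_simps)
    then show ?thesis
      using u by auto
  qed
  then show ?thesis
    using unimodular unfolding weighted_eval_at_def u_def[symmetric] by simp
qed

lemma weighted_eval_at_compose_eval:
  fixes T :: "('k::topological_space \<Rightarrow>\<^sub>C real) \<Rightarrow>\<^sub>L ('s::topological_space \<Rightarrow>\<^sub>C real)"
  assumes "weighted_eval_at T s k"
  shows "(T (const_bcontfun 1) s *\<^sub>R eval_functional s) o\<^sub>L T = eval_functional k"
    and "norm (T (const_bcontfun 1) s *\<^sub>R eval_functional s) = 1"
proof -
  note u = weighted_eval_at_weight[OF assms]
  show "(T (const_bcontfun 1) s *\<^sub>R eval_functional s) o\<^sub>L T = eval_functional k"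
  proof (rule blinfun_eqI)
    fix f
    show "((T (const_bcontfun 1) s *\<^sub>R eval_functional s) o\<^sub>L T) f = eval_functional k f"
      using u weighted_eval_at_apply[OF assms, of f] by (auto simp: blinfun.scaleR_left)
  qed
  show "norm (T (const_bcontfun 1) s *\<^sub>R eval_functional s) = 1"
    using u by auto
qed

lemma U_embedding_weighted_eval_at_unique:
  fixes T :: "('k::topological_space \<Rightarrow>\<^sub>C real) \<Rightarrow>\<^sub>L ('s::t2_space \<Rightarrow>\<^sub>C real)"
  assumes cS: "compact (UNIV :: 's set)" and "U_embedding T"
    and s: "weighted_eval_at T s k" and s': "weighted_eval_at T s' k"
  shows "s = s'"
proof (rule ccontr)
  assume "s \<noteq> s'"
  then have "{s'} \<inter> {s} = {}"
    by auto
  then obtain \<phi> :: "'s \<Rightarrow>\<^sub>C real" where "\<And>x. 0 \<le> \<phi> x \<and> \<phi> x \<le> 1"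
    and "\<And>x. x \<in> {s'} \<Longrightarrow> \<phi> x = 0" and "\<And>x. x \<in> {s} \<Longrightarrow> \<phi> x = 1"
    using compact_Urysohn_bcontfun[OF cS closed_singleton closed_singleton] by blast
  then have "\<phi> s' = 0" and "\<phi> s = 1"
    by simp_all
  have "T (const_bcontfun 1) s *\<^sub>R eval_functional s = T (const_bcontfun 1) s' *\<^sub>R eval_functional s'"
    by (rule U_embedding_extension_unique[OF \<open>U_embedding T\<close>])
      (use weighted_eval_at_weight[OF s] weighted_eval_at_weight[OF s'] in
        \<open>auto simp: weighted_eval_at_compose_eval[OF s] weighted_eval_at_compose_eval[OF s']\<close>)
  then have "(T (const_bcontfun 1) s *\<^sub>R eval_functional s) \<phi> =
      (T (const_bcontfun 1) s' *\<^sub>R eval_functional s') \<phi>"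
    by simp
  then have "T (const_bcontfun 1) s * \<phi> s = T (const_bcontfun 1) s' * \<phi> s'"
    by (simp add: blinfun.scaleR_left)
  then show False
    using weighted_eval_at_weight[OF s] \<open>\<phi> s = 1\<close> \<open>\<phi> s' = 0\<close> by auto
qed

lemma closed_weighted_eval_at_graph:
  fixes T :: "('k::topological_space \<Rightarrow>\<^sub>C real) \<Rightarrow>\<^sub>L ('s::topological_space \<Rightarrow>\<^sub>C real)"
  shows "closed {(k, s). weighted_eval_at T s k}"
proof -
  have "{(k, s). weighted_eval_at T s k} =
      {z. \<bar>T (const_bcontfun 1) (snd z)\<bar> = 1} \<inter>
      (\<Inter>f. {z. T f (snd z) = T (const_bcontfun 1) (snd z) * f (fst z)})"
    by (rule set_eqI) (simp add: weighted_eval_at_def case_prod_beta)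
  also have "closed \<dots>"
    by (intro closed_Int closed_INT ballI closed_Collect_eq continuous_intros)
  finally show ?thesis .
qed

lemma weighted_eval_left_inverse:
  fixes T :: "('k::topological_space \<Rightarrow>\<^sub>C real) \<Rightarrow>\<^sub>L ('s::topological_space \<Rightarrow>\<^sub>C real)" and h :: "'k \<Rightarrow> 's"
  assumes hc: "continuous_on UNIV h" and h: "\<And>k. weighted_eval_at T (h k) k"
  shows "(composition_operator h o\<^sub>L mult_operator (T (const_bcontfun 1))) (T f) = f"
proof (rule bcontfun_eqI)
  fix k
  have "T (const_bcontfun 1) (h k) * T (const_bcontfun 1) (h k) = 1"
    using weighted_eval_at_weight[OF h[of k]] by auto
  then show "(composition_operator h o\<^sub>L mult_operator (T (const_bcontfun 1))) (T f) k = f k"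
    using weighted_eval_at_apply[OF h[of k], of f] by (simp add: hc mult.assoc[symmetric])
qed

lemma norm_weighted_eval_left_inverse_le:
  fixes T :: "('k::topological_space \<Rightarrow>\<^sub>C real) \<Rightarrow>\<^sub>L ('s::topological_space \<Rightarrow>\<^sub>C real)" and h :: "'k \<Rightarrow> 's"
  assumes hc: "continuous_on UNIV h" and iso: "\<And>f. norm (T f) = norm f"
  shows "norm (composition_operator h o\<^sub>L mult_operator (T (const_bcontfun 1))) \<le> 1"
proof -
  have "norm (composition_operator h o\<^sub>L mult_operator (T (const_bcontfun 1)))
      \<le> norm (composition_operator h) * norm (mult_operator (T (const_bcontfun 1)))"
    by (rule norm_blinfun_compose)
  also have "\<dots> \<le> 1 * norm (T (const_bcontfun 1))"
    by (intro mult_mono norm_composition_operator_le[OF hc] norm_mult_operator_le) simp_all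
  also have "\<dots> = 1"
    using iso[of "const_bcontfun 1"] by simp
  finally show ?thesis .
qed

lemma U_embedding_weighted_eval_at_range:
  fixes T :: "('k::topological_space \<Rightarrow>\<^sub>C real) \<Rightarrow>\<^sub>L ('s::t2_space \<Rightarrow>\<^sub>C real)" and h :: "'k \<Rightarrow> 's"
  assumes cS: "compact (UNIV :: 's set)" and UE: "U_embedding T"
    and hc: "continuous_on UNIV h" and "closed (range h)"
    and h: "\<And>k. weighted_eval_at T (h k) k"
    and unimodular: "\<bar>T (const_bcontfun 1) s\<bar> = 1"
  shows "s \<in> range h"
proof (rule ccontr)
  assume "s \<notin> range h"
  then have "range h \<inter> {s} = {}"
    by auto
  then obtain \<Phi> :: "'s \<Rightarrow>\<^sub>C real" where "\<And>x. 0 \<le> \<Phi> x \<and> \<Phi> x \<le> 1"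
    and \<Phi>0: "\<And>x. x \<in> range h \<Longrightarrow> \<Phi> x = 0" and \<Phi>1: "\<And>x. x \<in> {s} \<Longrightarrow> \<Phi> x = 1"
    using compact_Urysohn_bcontfun[OF cS \<open>closed (range h)\<close> closed_singleton] by blast
  note iso = conjunct1[OF UE[unfolded U_embedding_def], rule_format]
  define u where "u = T (const_bcontfun 1)"
  define M where "M = composition_operator h o\<^sub>L mult_operator u"
  have M_left_inverse: "M (T f) = f" for f
    unfolding M_def u_def using hc h by (rule weighted_eval_left_inverse)
  have norm_M: "norm M \<le> 1"
    unfolding M_def u_def using hc iso by (rule norm_weighted_eval_left_inverse_le)
  define y where "y = u s *\<^sub>R eval_functional s"
  \<comment> \<open>Both are norm-preserving extensions of \<open>y o\<^sub>L T\<close>, but only \<open>y\<close> sees the point \<open>s\<close> off \<open>range h\<close>.\<close>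
  have "y = (y o\<^sub>L T) o\<^sub>L M"
  proof (rule U_embedding_extension_unique[OF UE])
    show yT: "y o\<^sub>L T = ((y o\<^sub>L T) o\<^sub>L M) o\<^sub>L T"
      by (rule blinfun_eqI) (simp add: M_left_inverse)
    have "1 = (y o\<^sub>L T) (const_bcontfun 1)"
      using unimodular by (auto simp: y_def u_def blinfun.scaleR_left abs_if split: if_splits)
    also have "\<dots> \<le> norm (y o\<^sub>L T)"
      using norm_blinfun[of "y o\<^sub>L T" "const_bcontfun 1"] by simp
    finally show "norm y \<le> norm (y o\<^sub>L T)"
      using unimodular by (simp add: y_def u_def)
    have "norm ((y o\<^sub>L T) o\<^sub>L M) \<le> norm (y o\<^sub>L T) * norm M"
      by (rule norm_blinfun_compose)
    also have "\<dots> \<le> norm (y o\<^sub>L T)"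
      using norm_M by (simp add: mult_left_le)
    finally show "norm ((y o\<^sub>L T) o\<^sub>L M) \<le> norm (((y o\<^sub>L T) o\<^sub>L M) o\<^sub>L T)"
      by (simp flip: yT)
  qed
  then have "y \<Phi> = ((y o\<^sub>L T) o\<^sub>L M) \<Phi>"
    by (rule arg_cong[where f = "\<lambda>z. blinfun_apply z \<Phi>"])
  moreover have "M \<Phi> = 0"
    by (rule bcontfun_eqI) (simp add: M_def hc \<Phi>0)
  moreover have "y \<Phi> = u s"
    using \<Phi>1 by (simp add: y_def blinfun.scaleR_left)
  ultimately show False
    using unimodular by (simp add: u_def)
qed

lemma U_embedding_weighted_eval_map_range:
  fixes T :: "('k::topological_space \<Rightarrow>\<^sub>C real) \<Rightarrow>\<^sub>L ('s::t2_space \<Rightarrow>\<^sub>C real)" and h :: "'k \<Rightarrow> 's"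
  assumes cK: "compact (UNIV :: 'k set)" and cS: "compact (UNIV :: 's set)" and UE: "U_embedding T"
    and hc: "continuous_on UNIV h" and h: "\<And>k. weighted_eval_at T (h k) k"
  shows "range h = {s. 1 \<le> \<bar>T (const_bcontfun 1) s\<bar>}"
proof (intro set_eqI iffI)
  fix s
  assume "s \<in> range h"
  then obtain k where "s = h k"
    by blast
  then show "s \<in> {s. 1 \<le> \<bar>T (const_bcontfun 1) s\<bar>}"
    using weighted_eval_at_weight[OF h[of k]] by auto
next
  fix s
  assume "s \<in> {s. 1 \<le> \<bar>T (const_bcontfun 1) s\<bar>}"
  moreover have "\<bar>T (const_bcontfun 1) s\<bar> \<le> 1"
    using abs_apply_bcontfun_le_norm[of "T (const_bcontfun 1)" s] UE
    by (simp add: U_embedding_def)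
  ultimately have "\<bar>T (const_bcontfun 1) s\<bar> = 1"
    by simp
  moreover have "closed (range h)"
    using compact_continuous_image[OF hc cK] by (rule compact_imp_closed)
  ultimately show "s \<in> range h"
    using U_embedding_weighted_eval_at_range[OF cS UE hc _ h] by blast
qed

lemma weighted_eval_at_linear_extension_operator:
  fixes T :: "('k::topological_space \<Rightarrow>\<^sub>C real) \<Rightarrow>\<^sub>L ('s::topological_space \<Rightarrow>\<^sub>C real)" and h :: "'k \<Rightarrow> 's"
  assumes iso: "\<And>f. norm (T f) = norm f" and h: "\<And>k. weighted_eval_at T (h k) k"
  shows "linear_extension_operator h (mult_operator (T (const_bcontfun 1)) o\<^sub>L T)"
    and "norm (mult_operator (T (const_bcontfun 1)) o\<^sub>L T) = 1"
proof -
  let ?v = "mult_operator (T (const_bcontfun 1)) o\<^sub>L T"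
  have extends: "?v f (h k) = f k" for f k
    using weighted_eval_at_weight[OF h[of k]] weighted_eval_at_apply[OF h[of k], of f] by auto
  then show "linear_extension_operator h ?v"
    by (simp add: linear_extension_operator_def)
  show "norm ?v = 1"
  proof (rule antisym)
    have "norm ?v \<le> norm (mult_operator (T (const_bcontfun 1))) * norm T"
      by (rule norm_blinfun_compose)
    also have "\<dots> \<le> 1 * 1"
      using norm_mult_operator_le[of "T (const_bcontfun 1)"] iso[of "const_bcontfun 1"]
      by (intro mult_mono norm_blinfun_le_one_if_isometry[OF iso]) simp_all
    finally show "norm ?v \<le> 1"
      by simp
    have "1 = \<bar>?v (const_bcontfun 1) (h undefined)\<bar>"
      by (simp only: extends) simp
    also have "\<dots> \<le> norm (?v (const_bcontfun 1))"
      by (rule abs_apply_bcontfun_le_norm)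
    also have "\<dots> \<le> norm ?v * norm (const_bcontfun 1 :: 'k \<Rightarrow>\<^sub>C real)"
      by (rule norm_blinfun)
    finally show "1 \<le> norm ?v"
      by simp
  qed
qed

lemma weighted_eval_map_inj:
  fixes T :: "('k::t2_space \<Rightarrow>\<^sub>C real) \<Rightarrow>\<^sub>L ('s::topological_space \<Rightarrow>\<^sub>C real)" and h :: "'k \<Rightarrow> 's"
  assumes cK: "compact (UNIV :: 'k set)" and h: "\<And>k. weighted_eval_at T (h k) k"
  shows "inj h"
proof (rule injI)
  fix k k'
  assume "h k = h k'"
  then have same: "f k = f k'" for f :: "'k \<Rightarrow>\<^sub>C real"
    using weighted_eval_at_apply[OF h[of k], of f] weighted_eval_at_apply[OF h[of k'], of f]
      weighted_eval_at_weight[OF h[of k]]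
    by auto
  show "k = k'"
  proof (rule ccontr)
    assume "k \<noteq> k'"
    then have "{k'} \<inter> {k} = {}"
      by auto
    then obtain \<phi> :: "'k \<Rightarrow>\<^sub>C real" where "\<And>x. 0 \<le> \<phi> x \<and> \<phi> x \<le> 1"
      and "\<And>x. x \<in> {k'} \<Longrightarrow> \<phi> x = 0" and "\<And>x. x \<in> {k} \<Longrightarrow> \<phi> x = 1"
      using compact_Urysohn_bcontfun[OF cK closed_singleton closed_singleton] by blast
    then show False
      using same[of \<phi>] by simp
  qed
qed

lemma U_embedding_weighted_eval_map_continuous:
  fixes T :: "('k::topological_space \<Rightarrow>\<^sub>C real) \<Rightarrow>\<^sub>L ('s::t2_space \<Rightarrow>\<^sub>C real)" and h :: "'k \<Rightarrow> 's"
  assumes cS: "compact (UNIV :: 's set)" and UE: "U_embedding T"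
    and h: "\<And>k. weighted_eval_at T (h k) k"
  shows "continuous_on UNIV h"
proof (rule continuous_on_if_closed_graph[OF cS])
  have "range (\<lambda>k. (k, h k)) = {(k, s). weighted_eval_at T s k}"
    using h U_embedding_weighted_eval_at_unique[OF cS UE] by auto
  then show "closed (range (\<lambda>k. (k, h k)))"
    by (simp add: closed_weighted_eval_at_graph)
qed

lemma extension_embedding_if_U_embedding:
  fixes T :: "('k::t2_space \<Rightarrow>\<^sub>C real) \<Rightarrow>\<^sub>L ('s::t2_space \<Rightarrow>\<^sub>C real)"
  assumes cK: "compact (UNIV :: 'k set)" and cS: "compact (UNIV :: 's set)" and UE: "U_embedding T"
  shows "\<exists>h :: 'k \<Rightarrow> 's. embedding_map euclidean euclidean h \<and>
    (\<exists>v. linear_extension_operator h v \<and> norm v = 1) \<and> gdelta_in euclidean (range h)"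
proof -
  note iso = conjunct1[OF UE[unfolded U_embedding_def], rule_format]
  have "\<forall>k. \<exists>s. weighted_eval_at T s k"
  proof
    fix k
    obtain s where unimodular: "\<bar>T (const_bcontfun 1) s\<bar> = 1"
      and peak: "\<forall>p. apply_bcontfun p k = 1 \<and> norm p \<le> 1 \<longrightarrow> T p s = T (const_bcontfun 1) s"
      using isometry_common_peak_point[OF cS iso, of k] by blast
    have "weighted_eval_at T s k"
      using unimodular by (rule weighted_eval_at_common_peak_point[OF cK iso]) (intro peak[rule_format] conjI)
    then show "\<exists>s. weighted_eval_at T s k" ..
  qed
  then obtain h :: "'k \<Rightarrow> 's" where h: "\<forall>k. weighted_eval_at T (h k) k"
    by (rule choice[THEN exE])
  have hc: "continuous_on UNIV h"
    using cS UE h by (intro U_embedding_weighted_eval_map_continuous) auto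
  have "compact_space (euclidean :: 'k topology)"
    using cK by (simp add: compact_space_def)
  moreover have "inj h"
    using cK h by (intro weighted_eval_map_inj) auto
  ultimately have embedding: "embedding_map euclidean euclidean h"
    using hc Hausdorff_space_euclidean_t2
    by (intro continuous_imp_embedding_map) (simp_all add: inj_on_def inj_def)
  have "range h = {s. 1 \<le> \<bar>T (const_bcontfun 1) s\<bar>}"
    using cK cS UE hc h by (intro U_embedding_weighted_eval_map_range) auto
  then have "gdelta_in euclidean (range h)"
    by (simp add: gdelta_in_Collect_ge continuous_intros)
  with embedding weighted_eval_at_linear_extension_operator[OF iso h[rule_format]] show ?thesis
    by (intro exI[of _ h] conjI exI[of _ "mult_operator (T (const_bcontfun 1)) o\<^sub>L T"])
qed


theorem theorem6p22:
  fixes dummyK :: "'k::t2_space" and dummyS :: "'s::t2_space"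
  assumes "compact (UNIV :: 'k set)" and "compact (UNIV :: 's set)"
  shows "(\<exists>T :: ('k \<Rightarrow>\<^sub>C real) \<Rightarrow>\<^sub>L ('s \<Rightarrow>\<^sub>C real). U_embedding T) \<longleftrightarrow>
         (\<exists>h :: 'k \<Rightarrow> 's. embedding_map euclidean euclidean h \<and>
            (\<exists>v. linear_extension_operator h v \<and> norm v = 1) \<and>
            gdelta_in euclidean (range h))"
proof
  assume "\<exists>T :: ('k \<Rightarrow>\<^sub>C real) \<Rightarrow>\<^sub>L ('s \<Rightarrow>\<^sub>C real). U_embedding T"
  then obtain T :: "('k \<Rightarrow>\<^sub>C real) \<Rightarrow>\<^sub>L ('s \<Rightarrow>\<^sub>C real)" where "U_embedding T" ..
  then show "\<exists>h :: 'k \<Rightarrow> 's. embedding_map euclidean euclidean h \<and>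
      (\<exists>v. linear_extension_operator h v \<and> norm v = 1) \<and> gdelta_in euclidean (range h)"
    by (rule extension_embedding_if_U_embedding[OF assms])
next
  assume "\<exists>h :: 'k \<Rightarrow> 's. embedding_map euclidean euclidean h \<and>
      (\<exists>v. linear_extension_operator h v \<and> norm v = 1) \<and> gdelta_in euclidean (range h)"
  then obtain h :: "'k \<Rightarrow> 's" and v where "embedding_map euclidean euclidean h"
    and "linear_extension_operator h v" and "norm v = 1" and "gdelta_in euclidean (range h)"
    by blast
  then show "\<exists>T :: ('k \<Rightarrow>\<^sub>C real) \<Rightarrow>\<^sub>L ('s \<Rightarrow>\<^sub>C real). U_embedding T"
    by (rule U_embedding_if_extension_operator[OF assms])
qed

end
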